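(* Let $\mathcal{G}=(V,\mathcal{E})$ be a plurigraph with $V=[n]$, and let $(V,E)\in\mathcal{E}$ be a contraction-ready pluriedge with contraction-ready composition $(B_1,\dots,B_\ell)$ and with $k\ge 0$ such that $B_i$ is a singleton if and only if $i>k$. Let $r_i=|B_i|-1$. Then $$Y_{\mathcal{G}}=Y_{\mathcal{G}\setminus(V,E)}-Y_{\mathcal{G}/(V,E)}\uparrow^{(r_1,r_2,\dots,r_k)}.$$
   Context: Let $\mathbb{P}=\{1,2,\dots\}$ and work in the ring of formal power series over a field $\mathbb{K}$ of characteristic zero in noncommuting variables $y_1,y_2,\dots$. A graph is a pair $(V,E)$ with $E$ a finite multiset of unordered pairs $uv$ of (not necessarily distinct) elements of $V$ (loops and multiple edges allowed). A plurigraph is a pair $\mathcal{G}=(V,\mathcal{E})$ with $V$ a finite set and $\mathcal{E}$ a finite multiset of graphs $(V,E)$ with vertex set $V$ and $E\neq\emptyset$ (pluriedges). A map $f:V\to\mathbb{P}$ is a proper coloring of $\mathcal{G}$ if for every pluriedge $(V,E)\in\mathcal{E}$ there is an edge $uv\in E$ with $f(u)\neq f(v)$. For $V=[n]$, the chromatic nc-symmetric function is $Y_{\mathcal{G}}=\sum_f y_{f(1)}y_{f(2)}\cdots y_{f(n)}$, summed over proper colorings $f$. Deletion: $\mathcal{G}\setminus(V,E)=(V,\mathcal{E}')$ where $\mathcal{E}'$ is $\mathcal{E}$ with one copy of $(V,E)$ removed. For disjoint $A,B\subseteq[n]$ write $A>B$ if $a>b$ for all $a\in A,b\in B$. A pluriedge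 $(V,E)$ is contraction-ready if the connected components of the graph $(V,E)$ can be ordered as $B_1,\dots,B_\ell$ with $B_i>B_j$ whenever $i<j$ and such that there is $k\ge0$ with $B_i$ a singleton iff $i>k$; $(B_1,\dots,B_\ell)$ is the contraction-ready composition. Contraction: $\mathcal{G}/(V,E)$ is the plurigraph with vertex set $[\ell]$, where all vertices of $B_i$ are identified to the single vertex $\ell-i+1$ (call this map $\phi:[n]\to[\ell]$), and whose pluriedge multiset is $\{([\ell],\{\phi(u)\phi(v): uv\in E'\}) : (V,E')\in\mathcal{E}'\}$ (edges taken as multisets; loops may arise). Induction: for nonnegative integers $r_1,\dots,r_k$ and a monomial $y_{i_1}\cdots y_{i_m}$ with $k\le m$, set $y_{i_1}\cdots y_{i_m}\uparrow^{(r_1,\dots,r_k)}=y_{i_1}\cdots y_{i_{m-k}}\,y_{i_{m-k+1}}^{1+r_k}\cdots y_{i_{m-1}}^{1+r_2}\,y_{i_m}^{1+r_1}$, extended linearly (termwise) to homogeneous series of degree $m$. *)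

theory Defs
  imports Main "HOL-Library.Multiset" "HOL-Library.Uprod"
begin

text \<open>Noncommutative formal power series in y_1, y_2, ... over a field 'k are represented
  as coefficient functions on words: the word [i1,...,im] (a list of positive integers)
  stands for the monomial y_i1 ... y_im.\<close>

type_synonym 'k ncseries = "nat list \<Rightarrow> 'k"

text \<open>A graph on vertex set [n] = {1..n}: a finite multiset of unordered pairs (loops allowed).
  A plurigraph on [n]: a finite multiset of such graphs (pluriedges), each with nonempty edge set.\<close>

type_synonym graph_edges = "nat uprod multiset"
type_synonym plurigraph_edges = "nat uprod multiset multiset"

definition is_plurigraph :: "nat \<Rightarrow> plurigraph_edges \<Rightarrow> bool" where
  "is_plurigraph n P \<longleftrightarrow>
     (\<forall>E\<in>#P. E \<noteq> {#} \<and> (\<forall>e\<in>#E. set_uprod e \<subseteq> {1..n}))"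

text \<open>A word w of length n encodes the map f : [n] \<rightarrow> P with f i = w ! (i - 1).\<close>

definition proper_coloring :: "nat \<Rightarrow> plurigraph_edges \<Rightarrow> nat list \<Rightarrow> bool" where
  "proper_coloring n P w \<longleftrightarrow>
     length w = n \<and> (\<forall>c\<in>set w. 1 \<le> c) \<and>
     (\<forall>E\<in>#P. \<exists>u v. Upair u v \<in># E \<and> w ! (u - 1) \<noteq> w ! (v - 1))"

text \<open>Chromatic nc-symmetric function Y_G (each proper colouring contributes its monomial;
  distinct colourings give distinct words, so all coefficients are 0 or 1).\<close>

definition chrom_nc :: "nat \<Rightarrow> plurigraph_edges \<Rightarrow> 'k::field_char_0 ncseries" where
  "chrom_nc n P w = (if proper_coloring n P w then 1 else 0)"

definition graph_conn :: "graph_edges \<Rightarrow> (nat \<times> nat) set" where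
  "graph_conn E = {(u, v). Upair u v \<in># E}\<^sup>*"

definition components :: "nat \<Rightarrow> graph_edges \<Rightarrow> nat set set" where
  "components n E = (\<lambda>u. {v \<in> {1..n}. (u, v) \<in> graph_conn E}) ` {1..n}"

text \<open>Contraction-ready composition (B_1,...,B_l) (as a list, 0-indexed) with parameter k.\<close>

definition contraction_ready_comp ::
    "nat \<Rightarrow> graph_edges \<Rightarrow> nat set list \<Rightarrow> nat \<Rightarrow> bool" where
  "contraction_ready_comp n E Bs k \<longleftrightarrow>
     distinct Bs \<and> set Bs = components n E \<and>
     (\<forall>i j. i < j \<and> j < length Bs \<longrightarrow> (\<forall>a\<in>Bs ! i. \<forall>b\<in>Bs ! j. b < a)) \<and>
     k \<le> length Bs \<and>
     (\<forall>i < length Bs. (card (Bs ! i) = 1 \<longleftrightarrow> k \<le> i))"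

text \<open>phi: vertices of B_i (1-indexed) go to l - i + 1; with 0-indexed i this is l - i.\<close>

definition contr_map :: "nat set list \<Rightarrow> nat \<Rightarrow> nat" where
  "contr_map Bs v = length Bs - (THE i. i < length Bs \<and> v \<in> Bs ! i)"

definition contract ::
    "nat set list \<Rightarrow> plurigraph_edges \<Rightarrow> graph_edges \<Rightarrow> plurigraph_edges" where
  "contract Bs P E = image_mset (image_mset (map_uprod (contr_map Bs))) (P - {#E#})"

text \<open>Induction on monomials: rs = [r_1,...,r_k]; the last k letters of the word u
  get exponents 1 + r_k, ..., 1 + r_1.\<close>

definition induce_word :: "nat list \<Rightarrow> nat list \<Rightarrow> nat list" where
  "induce_word rs u =
     take (length u - length rs) u @
     concat (map2 (\<lambda>a e. replicate (Suc e) a) (drop (length u - length rs) u) (rev rs))"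

text \<open>Termwise linear extension to homogeneous series of degree m (m \<ge> length rs).
  The sum ranges over the (finite) set of monomials of degree m mapped to w.\<close>

definition induce :: "nat \<Rightarrow> nat list \<Rightarrow> 'k::field_char_0 ncseries \<Rightarrow> 'k ncseries" where
  "induce m rs F w =
     (\<Sum>u \<in> {u. length u = m \<and> set u \<subseteq> set w \<and> induce_word rs u = w}. F u)"

end

theory Submission
  imports Defs
begin

text \<open>A colouring is proper for \<open>G\<close> iff it is proper for \<open>G \<setminus> E\<close> and not constant on the
  edges of \<open>E\<close>. So \<open>Y\<^sub>G\<^sub>\<setminus>\<^sub>E - Y\<^sub>G\<close> counts the colourings proper for \<open>G \<setminus> E\<close> that are constant
  on the components \<open>B\<^sub>i\<close> of \<open>(V, E)\<close>, and these are exactly the pullbacks \<open>u \<circ> \<phi>\<close> of the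
  proper colourings \<open>u\<close> of \<open>G / E\<close> along the quotient map \<open>\<phi>\<close>. As the components are ordered
  by their elements, \<open>\<phi>\<close> is monotone, so its fibres are consecutive intervals of \<open>[n]\<close>; hence
  the word of \<open>u \<circ> \<phi>\<close> is \<open>u\<close> with its \<open>i\<close>-th letter from the right repeated \<open>|B\<^sub>i|\<close> times,
  which is the induced monomial \<open>u\<up>(r\<^sub>1, \<dots>, r\<^sub>k)\<close>.\<close>

definition monochromatic :: "graph_edges \<Rightarrow> nat list \<Rightarrow> bool" where
  "monochromatic E w \<longleftrightarrow> (\<forall>u v. Upair u v \<in># E \<longrightarrow> w ! (u - 1) = w ! (v - 1))"

lemma proper_coloring_add_mset_iff:
  "proper_coloring n (add_mset E Q) w \<longleftrightarrow> proper_coloring n Q w \<and> \<not> monochromatic E w"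
  unfolding proper_coloring_def monochromatic_def by auto

lemma chrom_nc_delete:
  assumes "E \<in># P"
  shows "(chrom_nc n P w :: 'k::field_char_0) =
           chrom_nc n (P - {#E#}) w
           - (if proper_coloring n (P - {#E#}) w \<and> monochromatic E w then 1 else 0)"
  using proper_coloring_add_mset_iff[of n E "P - {#E#}" w]
  unfolding insert_DiffM[OF assms] chrom_nc_def by auto

text \<open>The colouring \<open>u \<circ> \<phi>\<close> of \<open>[n]\<close>; vertices are 1-based, list positions 0-based.\<close>

definition pullback :: "(nat \<Rightarrow> nat) \<Rightarrow> nat \<Rightarrow> nat list \<Rightarrow> nat list" where
  "pullback \<phi> n u = map (\<lambda>v. u ! (\<phi> v - 1)) [1..<Suc n]"

lemma length_pullback [simp]: "length (pullback \<phi> n u) = n"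
  unfolding pullback_def by simp

lemma nth_pullback: "v \<in> {1..n} \<Longrightarrow> pullback \<phi> n u ! (v - 1) = u ! (\<phi> v - 1)"
  unfolding pullback_def by (auto simp: nth_map_upt simp del: upt_Suc)

lemma set_pullback:
  assumes "\<phi> ` {1..n} = {1..m}" "length u = m"
  shows "set (pullback \<phi> n u) = set u"
proof -
  have "set (pullback \<phi> n u) = (\<lambda>j. u ! (j - 1)) ` \<phi> ` {1..n}"
    unfolding pullback_def by auto
  also have "\<dots> = (\<lambda>j. u ! (j - 1)) ` {1..length u}"
    by (simp only: assms)
  also have "\<dots> = (\<lambda>i. u ! i) ` {..<length u}"
    by (simp only: image_Suc_lessThan[symmetric] image_image diff_Suc_1)
  also have "\<dots> = set u"
    by (auto simp: in_set_conv_nth)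
  finally show ?thesis .
qed

lemma pullback_inj:
  assumes surj: "\<phi> ` {1..n} = {1..m}" and "length u = m" "length u' = m"
    and eq: "pullback \<phi> n u = pullback \<phi> n u'"
  shows "u = u'"
proof (rule nth_equalityI)
  fix j assume "j < length u"
  then have "Suc j \<in> \<phi> ` {1..n}" using surj assms(2) by simp
  then obtain v where v: "v \<in> {1..n}" "\<phi> v = Suc j" by auto
  show "u ! j = u' ! j"
    using nth_pullback[OF v(1), of \<phi> u] nth_pullback[OF v(1), of \<phi> u'] eq v(2) by simp
qed (use assms in simp)

lemma ex_pullback_iff:
  assumes surj: "\<phi> ` {1..n} = {1..m}" and w: "length w = n"
  shows "(\<exists>u. length u = m \<and> pullback \<phi> n u = w) \<longleftrightarrow>
           (\<forall>a\<in>{1..n}. \<forall>b\<in>{1..n}. \<phi> a = \<phi> b \<longrightarrow> w ! (a - 1) = w ! (b - 1))"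
proof
  assume "\<exists>u. length u = m \<and> pullback \<phi> n u = w"
  then show "\<forall>a\<in>{1..n}. \<forall>b\<in>{1..n}. \<phi> a = \<phi> b \<longrightarrow> w ! (a - 1) = w ! (b - 1)"
    by (metis nth_pullback)
next
  assume const: "\<forall>a\<in>{1..n}. \<forall>b\<in>{1..n}. \<phi> a = \<phi> b \<longrightarrow> w ! (a - 1) = w ! (b - 1)"
  define u where "u = map (\<lambda>j. w ! (inv_into {1..n} \<phi> (Suc j) - 1)) [0..<m]"
  have "pullback \<phi> n u = w"
  proof (rule nth_equalityI)
    fix p assume "p < length (pullback \<phi> n u)"
    then have p: "Suc p \<in> {1..n}" by simp
    define a where "a = inv_into {1..n} \<phi> (\<phi> (Suc p))"
    have "\<phi> (Suc p) \<in> \<phi> ` {1..n}" using p by blast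
    then have a: "a \<in> {1..n}" "\<phi> a = \<phi> (Suc p)"
      unfolding a_def by (rule inv_into_into, rule f_inv_into_f)
    have "\<phi> (Suc p) \<in> {1..m}" using p surj by blast
    then have "\<phi> (Suc p) - 1 < m" "Suc (\<phi> (Suc p) - 1) = \<phi> (Suc p)" by auto
    then have "pullback \<phi> n u ! p = w ! (a - 1)"
      using nth_pullback[OF p] by (simp add: u_def a_def del: upt_Suc)
    also have "\<dots> = w ! p" using const a p by fastforce
    finally show "pullback \<phi> n u ! p = w ! p" .
  qed (simp add: w)
  moreover have "length u = m" by (simp add: u_def)
  ultimately show "\<exists>u. length u = m \<and> pullback \<phi> n u = w" by blast
qed

lemma downward_closed_eq_atLeastAtMost:
  fixes D :: "nat set"
  assumes "finite D" "0 \<notin> D" and closed: "\<And>x y. x \<in> D \<Longrightarrow> 1 \<le> y \<Longrightarrow> y \<le> x \<Longrightarrow> y \<in> D"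
  shows "D = {1..card D}"
proof (cases "D = {}")
  case False
  define M where "M = Max D"
  have "D = {1..M}"
  proof
    show "D \<subseteq> {1..M}"
    proof
      fix x assume "x \<in> D"
      have "x \<noteq> 0"
      proof
        assume "x = 0"
        with \<open>x \<in> D\<close> assms(2) show False by simp
      qed
      moreover have "x \<le> M" using assms(1) \<open>x \<in> D\<close> by (simp add: M_def)
      ultimately show "x \<in> {1..M}" by simp
    qed
    show "{1..M} \<subseteq> D"
      using closed[OF Max_in[OF assms(1) False]] by (auto simp: M_def)
  qed
  then show ?thesis by simp
qed simp

lemma pullback_mono_on:
  assumes mono: "mono_on {1..n} \<phi>" and range: "\<phi> ` {1..n} \<subseteq> {1..m}" and u: "length u = m"
  shows "pullback \<phi> n u =
           concat (map2 (\<lambda>a c. replicate c a) u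
                     (map (\<lambda>j. card {v \<in> {1..n}. \<phi> v = Suc j}) [0..<m]))"
    (is "_ = concat ?xs")
proof -
  define f where "f = (\<lambda>v. u ! (\<phi> v - 1))"
  define s where "s j = card {v \<in> {1..n}. \<phi> v \<le> j}" for j
  \<comment> \<open>Monotonicity makes every sublevel set of \<open>\<phi>\<close> an initial segment of \<open>[n]\<close>.\<close>
  have sublevel: "{v \<in> {1..n}. \<phi> v \<le> j} = {1..s j}" for j
    unfolding s_def
  proof (rule downward_closed_eq_atLeastAtMost)
    fix x y assume "x \<in> {v \<in> {1..n}. \<phi> v \<le> j}" "1 \<le> y" "y \<le> x"
    then show "y \<in> {v \<in> {1..n}. \<phi> v \<le> j}" using mono_onD[OF mono, of y x] by auto
  qed auto
  have "1 \<le> \<phi> v \<and> \<phi> v \<le> m" if "v \<in> {1..n}" for v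
    using subsetD[OF range imageI[OF that]] by simp
  then have "{v \<in> {1..n}. \<phi> v \<le> 0} = {}" "{v \<in> {1..n}. \<phi> v \<le> m} = {1..n}"
    by fastforce+
  then have s0: "s 0 = 0" and sm: "s m = n"
    by (simp_all add: s_def)
  have level: "{v \<in> {1..n}. \<phi> v = Suc j} = {s j<..s (Suc j)}" for j
  proof -
    have "{v \<in> {1..n}. \<phi> v = Suc j} = {v \<in> {1..n}. \<phi> v \<le> Suc j} - {v \<in> {1..n}. \<phi> v \<le> j}"
      by auto
    also have "\<dots> = {1..s (Suc j)} - {1..s j}"
      by (simp only: sublevel)
    also have "\<dots> = {s j<..s (Suc j)}"
      by auto
    finally show ?thesis .
  qed
  have card_level: "card {v \<in> {1..n}. \<phi> v = Suc j} = s (Suc j) - s j" for j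
    by (simp only: level card_greaterThanAtMost)
  have s_le: "s j \<le> s (Suc j)" for j
    unfolding s_def by (rule card_mono) auto
  have prefix: "map f [1..<Suc (s j)] = concat (take j ?xs)" if "j \<le> m" for j
    using that
  proof (induction j)
    case 0 then show ?case by (simp add: s0)
  next
    case (Suc j)
    have "map f [Suc (s j)..<Suc (s (Suc j))] = replicate (s (Suc j) - s j) (u ! j)"
    proof (rule replicate_eqI)
      fix y assume "y \<in> set (map f [Suc (s j)..<Suc (s (Suc j))])"
      then obtain v where "v \<in> set [Suc (s j)..<Suc (s (Suc j))]" "y = f v"
        by (auto simp del: upt_Suc)
      then have "v \<in> {s j<..s (Suc j)}" "y = f v" by auto
      then show "y = u ! j" unfolding level[symmetric] by (simp add: f_def)
    qed (simp del: upt_Suc)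
    moreover have "?xs ! j = replicate (s (Suc j) - s j) (u ! j)"
      using Suc.prems u card_level[of j] by simp
    moreover have "[1..<Suc (s (Suc j))] = [1..<Suc (s j)] @ [Suc (s j)..<Suc (s (Suc j))]"
      using upt_add_eq_append[of 1 "Suc (s j)" "s (Suc j) - s j"] s_le[of j] by simp
    ultimately show ?case
      using Suc by (simp add: take_Suc_conv_app_nth u)
  qed
  show ?thesis
    using prefix[of m] u by (simp add: pullback_def f_def sm del: upt_Suc)
qed

lemma concat_map2_replicate_1:
  "concat (map2 (\<lambda>a c. replicate c a) xs (replicate (length xs) 1)) = xs"
  by (induction xs) auto

lemma induce_word_eq_concat_replicate:
  assumes "length u = d + length rs"
  shows "induce_word rs u = concat (map2 (\<lambda>a c. replicate c a) u (replicate d 1 @ map Suc (rev rs)))"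
proof -
  have u: "u = take d u @ drop d u" "length (take d u) = d" using assms by auto
  have "zip u (replicate d 1 @ map Suc (rev rs)) =
          zip (take d u) (replicate d 1) @ zip (drop d u) (map Suc (rev rs))"
    by (subst u(1), rule zip_append) (simp add: assms)
  then show ?thesis
    using concat_map2_replicate_1[of "take d u"] assms
    by (simp add: induce_word_def zip_map2 u(2) comp_def split_def del: map_replicate)
qed

lemma proper_coloring_image_iff:
  assumes Q: "is_plurigraph n Q" and surj: "\<phi> ` {1..n} = {1..m}" and u: "length u = m"
  shows "proper_coloring m (image_mset (image_mset (map_uprod \<phi>)) Q) u \<longleftrightarrow>
           proper_coloring n Q (pullback \<phi> n u)"
proof -
  have edge: "(\<exists>x y. Upair x y \<in># image_mset (map_uprod \<phi>) E' \<and> u ! (x - 1) \<noteq> u ! (y - 1)) \<longleftrightarrow>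
      (\<exists>a b. Upair a b \<in># E' \<and> pullback \<phi> n u ! (a - 1) \<noteq> pullback \<phi> n u ! (b - 1))"
    if "E' \<in># Q" for E'
  proof -
    have pullback_edge:
      "(pullback \<phi> n u ! (a - 1) \<noteq> pullback \<phi> n u ! (b - 1)) = (u ! (\<phi> a - 1) \<noteq> u ! (\<phi> b - 1))"
      if "Upair a b \<in># E'" for a b
    proof -
      have "a \<in> {1..n}" "b \<in> {1..n}"
        using Q \<open>E' \<in># Q\<close> that unfolding is_plurigraph_def by fastforce+
      then show ?thesis using nth_pullback[of a n \<phi> u] nth_pullback[of b n \<phi> u] by presburger
    qed
    have "(\<exists>x y. Upair x y \<in># image_mset (map_uprod \<phi>) E' \<and> u ! (x - 1) \<noteq> u ! (y - 1)) \<longleftrightarrow>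
        (\<exists>a b. Upair a b \<in># E' \<and> u ! (\<phi> a - 1) \<noteq> u ! (\<phi> b - 1))"
    proof
      assume "\<exists>x y. Upair x y \<in># image_mset (map_uprod \<phi>) E' \<and> u ! (x - 1) \<noteq> u ! (y - 1)"
      then obtain x y e where "e \<in># E'" "Upair x y = map_uprod \<phi> e" "u ! (x - 1) \<noteq> u ! (y - 1)"
        by auto
      moreover obtain a b where "e = Upair a b" by (cases e)
      ultimately show "\<exists>a b. Upair a b \<in># E' \<and> u ! (\<phi> a - 1) \<noteq> u ! (\<phi> b - 1)"
        by (auto; metis)
    next
      assume "\<exists>a b. Upair a b \<in># E' \<and> u ! (\<phi> a - 1) \<noteq> u ! (\<phi> b - 1)"
      then obtain a b where ab: "Upair a b \<in># E'" "u ! (\<phi> a - 1) \<noteq> u ! (\<phi> b - 1)" by blast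
      have "map_uprod \<phi> (Upair a b) \<in># image_mset (map_uprod \<phi>) E'"
        unfolding set_image_mset using ab(1) by (rule imageI)
      then show "\<exists>x y. Upair x y \<in># image_mset (map_uprod \<phi>) E' \<and> u ! (x - 1) \<noteq> u ! (y - 1)"
        using ab(2) by auto
    qed
    also have "\<dots> \<longleftrightarrow> (\<exists>a b. Upair a b \<in># E' \<and> pullback \<phi> n u ! (a - 1) \<noteq> pullback \<phi> n u ! (b - 1))"
      using pullback_edge by blast
    finally show ?thesis .
  qed
  show ?thesis
    unfolding proper_coloring_def using edge set_pullback[OF surj u] u by auto
qed

lemma sum_chrom_nc_pullback:
  assumes Q: "is_plurigraph n Q" and surj: "\<phi> ` {1..n} = {1..m}"
  shows "(\<Sum>u | length u = m \<and> pullback \<phi> n u = w.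
            chrom_nc m (image_mset (image_mset (map_uprod \<phi>)) Q) u :: 'k::field_char_0) =
         (if proper_coloring n Q w \<and> (\<exists>u. length u = m \<and> pullback \<phi> n u = w) then 1 else 0)"
proof (cases "\<exists>u. length u = m \<and> pullback \<phi> n u = w")
  case True
  then obtain u where u: "length u = m" "pullback \<phi> n u = w" by blast
  have "u' = u" if "length u' = m" "pullback \<phi> n u' = w" for u'
    using pullback_inj[OF surj that(1) u(1)] that(2) u(2) by simp
  then have "{u. length u = m \<and> pullback \<phi> n u = w} = {u}"
    using u by blast
  then show ?thesis
    using proper_coloring_image_iff[OF Q surj u(1)] True u(2) by (simp add: chrom_nc_def)
next
  case False
  then have empty: "{u. length u = m \<and> pullback \<phi> n u = w} = {}" by blast
  show ?thesis unfolding empty using False by simp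
qed

locale ordered_blocks =
  fixes n :: nat and Bs :: "nat set list"
  assumes covers: "\<Union> (set Bs) = {1..n}"
    and nonempty: "{} \<notin> set Bs"
    and decreasing: "\<And>i j a b. i < j \<Longrightarrow> j < length Bs \<Longrightarrow> a \<in> Bs ! i \<Longrightarrow> b \<in> Bs ! j \<Longrightarrow> b < a"
begin

lemma block_index_unique:
  assumes "i < length Bs" "j < length Bs" "v \<in> Bs ! i" "v \<in> Bs ! j"
  shows "i = j"
  using decreasing[of i j v v] decreasing[of j i v v] assms by (cases i j rule: linorder_cases) auto

lemma ex_block:
  assumes "v \<in> {1..n}"
  obtains i where "i < length Bs" "v \<in> Bs ! i"
proof -
  obtain B where "B \<in> set Bs" "v \<in> B" using covers assms by blast
  then show ?thesis using that by (auto simp: in_set_conv_nth)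
qed

lemma block_subset: "i < length Bs \<Longrightarrow> Bs ! i \<subseteq> {1..n}"
  using covers nth_mem by blast

lemma block_nonempty: "i < length Bs \<Longrightarrow> Bs ! i \<noteq> {}"
  using nonempty nth_mem by metis

lemma finite_block: "i < length Bs \<Longrightarrow> finite (Bs ! i)"
  by (rule finite_subset[OF block_subset]) simp_all

lemma card_block_pos: "i < length Bs \<Longrightarrow> 0 < card (Bs ! i)"
  using block_nonempty finite_block by (simp add: card_gt_0_iff)

lemma contr_map_eq:
  assumes "i < length Bs" "v \<in> Bs ! i"
  shows "contr_map Bs v = length Bs - i"
proof -
  have "(THE i. i < length Bs \<and> v \<in> Bs ! i) = i"
    by (rule the_equality) (use assms block_index_unique in auto)
  then show ?thesis unfolding contr_map_def by simp
qed

lemma contr_map_eq_iff: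
  assumes i: "i < length Bs" "a \<in> Bs ! i" and b: "b \<in> {1..n}"
  shows "contr_map Bs b = contr_map Bs a \<longleftrightarrow> b \<in> Bs ! i"
proof -
  obtain j where j: "j < length Bs" "b \<in> Bs ! j" using b by (rule ex_block)
  have "contr_map Bs b = contr_map Bs a \<longleftrightarrow> j = i"
    using contr_map_eq[OF j] contr_map_eq[OF i] j(1) i(1) by auto
  also have "\<dots> \<longleftrightarrow> b \<in> Bs ! i"
    using block_index_unique[OF j(1) i(1) j(2)] j(2) by auto
  finally show ?thesis .
qed

lemma contr_map_surj: "contr_map Bs ` {1..n} = {1..length Bs}"
proof
  show "contr_map Bs ` {1..n} \<subseteq> {1..length Bs}"
  proof
    fix x assume "x \<in> contr_map Bs ` {1..n}"
    then obtain v where v: "v \<in> {1..n}" "x = contr_map Bs v" by blast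
    obtain i where "i < length Bs" "v \<in> Bs ! i" using v(1) by (rule ex_block)
    then show "x \<in> {1..length Bs}" using v(2) contr_map_eq by simp
  qed
  show "{1..length Bs} \<subseteq> contr_map Bs ` {1..n}"
  proof
    fix j assume j: "j \<in> {1..length Bs}"
    then have i: "length Bs - j < length Bs" by (auto simp: diff_less)
    then obtain v where v: "v \<in> Bs ! (length Bs - j)" using block_nonempty by blast
    then have "contr_map Bs v = j" using contr_map_eq[OF i v] j by simp
    moreover have "v \<in> {1..n}" using block_subset[OF i] v by blast
    ultimately show "j \<in> contr_map Bs ` {1..n}" by (metis imageI)
  qed
qed

lemma mono_on_contr_map: "mono_on {1..n} (contr_map Bs)"
proof (rule mono_onI)
  fix a b assume a: "a \<in> {1..n}" and b: "b \<in> {1..n}" and "a \<le> b"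
  obtain i where i: "i < length Bs" "a \<in> Bs ! i" using a by (rule ex_block)
  obtain j where j: "j < length Bs" "b \<in> Bs ! j" using b by (rule ex_block)
  have "j \<le> i"
  proof (rule ccontr)
    assume "\<not> j \<le> i"
    then have "b < a" using decreasing[of i j a b] i j by simp
    with \<open>a \<le> b\<close> show False by simp
  qed
  then show "contr_map Bs a \<le> contr_map Bs b" using contr_map_eq[OF i] contr_map_eq[OF j] by simp
qed

lemma level_contr_map:
  assumes "j < length Bs"
  shows "{v \<in> {1..n}. contr_map Bs v = Suc j} = rev Bs ! j"
proof -
  define i where "i = length Bs - Suc j"
  have i: "i < length Bs" and rev: "rev Bs ! j = Bs ! i" using assms by (auto simp: i_def rev_nth)
  obtain a where a: "a \<in> Bs ! i" using block_nonempty[OF i] by blast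
  have "contr_map Bs a = Suc j" using contr_map_eq[OF i a] assms by (simp add: i_def)
  then have "{v \<in> {1..n}. contr_map Bs v = Suc j} = {v \<in> {1..n}. v \<in> Bs ! i}"
    using contr_map_eq_iff[OF i a] by auto
  also have "\<dots> = Bs ! i" using block_subset[OF i] by auto
  finally show ?thesis unfolding rev .
qed

lemma pullback_contr_map:
  assumes "length u = length Bs"
  shows "pullback (contr_map Bs) n u = concat (map2 (\<lambda>a c. replicate c a) u (map card (rev Bs)))"
proof -
  have "map (\<lambda>j. card {v \<in> {1..n}. contr_map Bs v = Suc j}) [0..<length Bs] = map card (rev Bs)"
    by (rule map_upt_eqI) (use level_contr_map in auto)
  then show ?thesis
    using pullback_mono_on[OF mono_on_contr_map _ assms] contr_map_surj by simp
qed

lemma induce_word_contr_map: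
  assumes "k \<le> length Bs" and singletons: "\<And>i. k \<le> i \<Longrightarrow> i < length Bs \<Longrightarrow> card (Bs ! i) = 1"
    and u: "length u = length Bs"
  shows "induce_word (map (\<lambda>B. card B - 1) (take k Bs)) u = pullback (contr_map Bs) n u"
proof -
  have "map card (rev Bs) = map card (rev (drop k Bs)) @ map card (rev (take k Bs))"
    by (metis append_take_drop_id map_append rev_append)
  also have "map card (rev (drop k Bs)) = replicate (length Bs - k) 1"
    using singletons by (intro replicate_eqI) (auto simp: in_set_conv_nth)
  also have "map card (rev (take k Bs)) = map Suc (rev (map (\<lambda>B. card B - 1) (take k Bs)))"
    using card_block_pos by (auto simp: rev_map in_set_conv_nth intro!: map_cong)
  finally show ?thesis
    using induce_word_eq_concat_replicate[of u "length Bs - k"] pullback_contr_map[OF u] assms(1) u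
    by simp
qed

end

lemma graph_conn_edge: "Upair a b \<in># E \<Longrightarrow> (a, b) \<in> graph_conn E"
  unfolding graph_conn_def by auto

lemma sym_graph_conn: "sym (graph_conn E)"
  unfolding graph_conn_def
proof (rule sym_rtrancl)
  show "sym {(u, v). Upair u v \<in># E}"
    by (rule symI) (metis Upair_inject case_prodD case_prodI mem_Collect_eq)
qed

lemma trans_graph_conn: "trans (graph_conn E)"
  unfolding graph_conn_def by (rule trans_rtrancl)

lemma monochromatic_graph_conn:
  assumes "monochromatic E w" "(a, b) \<in> graph_conn E"
  shows "w ! (a - 1) = w ! (b - 1)"
  using assms(2) unfolding graph_conn_def
proof (induction rule: rtrancl_induct)
  case (step y z)
  then show ?case using assms(1) unfolding monochromatic_def by auto
qed simp

lemma component_eq: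
  assumes "X \<in> components n E" "a \<in> X"
  shows "X = {b \<in> {1..n}. (a, b) \<in> graph_conn E}"
proof -
  obtain c where X: "X = {v \<in> {1..n}. (c, v) \<in> graph_conn E}"
    using assms(1) unfolding components_def by blast
  then have "(a, c) \<in> graph_conn E" using assms(2) sym_graph_conn by (auto dest: symD)
  then have "(c, b) \<in> graph_conn E \<longleftrightarrow> (a, b) \<in> graph_conn E" for b
    using sym_graph_conn trans_graph_conn by (meson symD transD)
  then show ?thesis unfolding X by auto
qed

lemma contraction_ready_comp_ordered_blocks:
  assumes "contraction_ready_comp n E Bs k"
  shows "ordered_blocks n Bs"
proof
  have comps: "set Bs = components n E" using assms unfolding contraction_ready_comp_def by blast
  have "X \<subseteq> {1..n}" if "X \<in> components n E" for X
    using that unfolding components_def by auto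
  moreover have "v \<in> {w \<in> {1..n}. (v, w) \<in> graph_conn E}" if "v \<in> {1..n}" for v
    using that unfolding graph_conn_def by simp
  ultimately show "\<Union> (set Bs) = {1..n}" "{} \<notin> set Bs"
    unfolding comps components_def by blast+
  show "\<And>i j a b. i < j \<Longrightarrow> j < length Bs \<Longrightarrow> a \<in> Bs ! i \<Longrightarrow> b \<in> Bs ! j \<Longrightarrow> b < a"
    using assms unfolding contraction_ready_comp_def by blast
qed

context ordered_blocks
begin

lemma contr_map_eq_iff_graph_conn:
  assumes comps: "set Bs = components n E" and a: "a \<in> {1..n}" and b: "b \<in> {1..n}"
  shows "contr_map Bs a = contr_map Bs b \<longleftrightarrow> (a, b) \<in> graph_conn E"
proof -
  obtain i where i: "i < length Bs" "a \<in> Bs ! i" using a by (rule ex_block)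
  have "Bs ! i \<in> components n E" using nth_mem[OF i(1)] unfolding comps .
  then have block: "Bs ! i = {b \<in> {1..n}. (a, b) \<in> graph_conn E}" using i(2) by (rule component_eq)
  have "contr_map Bs a = contr_map Bs b \<longleftrightarrow> contr_map Bs b = contr_map Bs a" by (rule eq_commute)
  also have "\<dots> \<longleftrightarrow> b \<in> Bs ! i" by (rule contr_map_eq_iff[OF i b])
  also have "\<dots> \<longleftrightarrow> (a, b) \<in> graph_conn E" using b unfolding block by simp
  finally show ?thesis .
qed

lemma ex_pullback_contr_map_iff:
  assumes comps: "set Bs = components n E" and edges: "\<forall>e\<in>#E. set_uprod e \<subseteq> {1..n}"
    and w: "length w = n"
  shows "(\<exists>u. length u = length Bs \<and> pullback (contr_map Bs) n u = w) \<longleftrightarrow> monochromatic E w"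
proof -
  have "(\<exists>u. length u = length Bs \<and> pullback (contr_map Bs) n u = w) \<longleftrightarrow>
      (\<forall>a\<in>{1..n}. \<forall>b\<in>{1..n}. (a, b) \<in> graph_conn E \<longrightarrow> w ! (a - 1) = w ! (b - 1))"
    using ex_pullback_iff[OF contr_map_surj w] contr_map_eq_iff_graph_conn[OF comps] by auto
  also have "\<dots> \<longleftrightarrow> monochromatic E w"
  proof
    assume "\<forall>a\<in>{1..n}. \<forall>b\<in>{1..n}. (a, b) \<in> graph_conn E \<longrightarrow> w ! (a - 1) = w ! (b - 1)"
    moreover have "a \<in> {1..n} \<and> b \<in> {1..n}" if "Upair a b \<in># E" for a b
      using edges that by fastforce
    ultimately show "monochromatic E w"
      unfolding monochromatic_def using graph_conn_edge by blast
  qed (use monochromatic_graph_conn in blast)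
  finally show ?thesis .
qed

end

lemma induce_chrom_nc_contract:
  assumes P: "is_plurigraph n P" and E: "E \<in># P" and ready: "contraction_ready_comp n E Bs k"
  shows "induce (length Bs) (map (\<lambda>B. card B - 1) (take k Bs))
           (chrom_nc (length Bs) (contract Bs P E)) w =
         (if proper_coloring n (P - {#E#}) w \<and> monochromatic E w then 1 else (0 :: 'k::field_char_0))"
proof -
  interpret ordered_blocks n Bs by (rule contraction_ready_comp_ordered_blocks[OF ready])
  let ?\<phi> = "contr_map Bs" and ?rs = "map (\<lambda>B. card B - 1) (take k Bs)"
  have comps: "set Bs = components n E" and k: "k \<le> length Bs"
    and singletons: "\<And>i. k \<le> i \<Longrightarrow> i < length Bs \<Longrightarrow> card (Bs ! i) = 1"
    using ready unfolding contraction_ready_comp_def by blast+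
  have edges: "\<forall>e\<in>#E. set_uprod e \<subseteq> {1..n}" and Q: "is_plurigraph n (P - {#E#})"
    using P E unfolding is_plurigraph_def by (auto dest: in_diffD)
  have fibre: "{u. length u = length Bs \<and> set u \<subseteq> set w \<and> induce_word ?rs u = w} =
        {u. length u = length Bs \<and> pullback ?\<phi> n u = w}"
    using induce_word_contr_map[OF k singletons] set_pullback[OF contr_map_surj] by auto
  have "induce (length Bs) ?rs (chrom_nc (length Bs) (contract Bs P E)) w =
      (if proper_coloring n (P - {#E#}) w \<and> (\<exists>u. length u = length Bs \<and> pullback ?\<phi> n u = w)
       then 1 else (0 :: 'k))"
    unfolding induce_def contract_def fibre by (rule sum_chrom_nc_pullback[OF Q contr_map_surj])
  also have "\<dots> = (if proper_coloring n (P - {#E#}) w \<and> monochromatic E w then 1 else 0)"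
    using ex_pullback_contr_map_iff[OF comps edges] unfolding proper_coloring_def by auto
  finally show ?thesis .
qed

theorem theorem2p4:
  fixes n :: nat and P :: plurigraph_edges and E :: graph_edges
    and Bs :: "nat set list" and k :: nat
  assumes "is_plurigraph n P"
    and "E \<in># P"
    and "contraction_ready_comp n E Bs k"
  shows "(chrom_nc n P :: 'k::field_char_0 ncseries) =
           (\<lambda>w. chrom_nc n (P - {#E#}) w
                - induce (length Bs) (map (\<lambda>B. card B - 1) (take k Bs))
                    (chrom_nc (length Bs) (contract Bs P E)) w)"
proof
  fix w
  show "(chrom_nc n P w :: 'k) = chrom_nc n (P - {#E#}) w
      - induce (length Bs) (map (\<lambda>B. card B - 1) (take k Bs))
          (chrom_nc (length Bs) (contract Bs P E)) w"
    unfolding chrom_nc_delete[OF assms(2)] induce_chrom_nc_contract[OF assms] ..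
qed

end
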